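(* In $\mathbb{Z}[q,q^{-1}][[x,y]]$, \[ A(q,x,y)=\sum_{i=1}^{\infty}q^i[i]!\,x^iy^i\prod_{j=0}^{i}\frac{1}{q^j-q^j[j+1]x+[j]xy}. \]
   Context: $[m]=1+q+\dots+q^{m-1}$ ($[0]=0$), $[i]!=\prod_{m=1}^i[m]$. For $0\le k\le n$, a $\hbox{Le}$-diagram in a $k\times(n-k)$ rectangle is a pair $(\lambda,D)$ with $\lambda=(\lambda_1\ge\dots\ge\lambda_k\ge0)$, $\lambda_1\le n-k$, and $D$ a filling of the Young diagram of $\lambda$ (row $i$ has $\lambda_i$ left-justified boxes, row 1 on top) by $0$'s and $1$'s such that no $0$ has a $1$ above it in its column and a $1$ to its left in its row; its rank is its number of $1$'s. $A_{k,n}(q)=\sum q^{\mathrm{rank}}$ over such diagrams (the generating function of cells of the totally nonnegative Grassmannian $Gr^+_{k,n}$ by dimension), $A_{k,n}(q)=0$ for $n<k$, and $A(q,x,y)=\sum_{k\ge1}\sum_{n\ge0}A_{k,n}(q)x^ny^k$. Each factor $1/(q^j-q^j[j+1]x+[j]xy)$ is its inverse in $\mathbb{Z}[q,q^{-1}][[x,y]]$ (equivalently the expansion of $\frac{1}{q^j(1-[j+1]x)\left(1-\frac{q^{-j}[j]y}{1-[j+1]x}\right)}$). *)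

theory Defs
  imports "HOL-Computational_Algebra.Formal_Power_Series"
          "HOL-Computational_Algebra.Formal_Laurent_Series"
begin

text \<open>A Le-diagram in a k x (n-k) rectangle: a partition lam (rows 0..k-1, row 0 on top,
  lam i = 0 for i >= k), weakly decreasing, lam 0 <= n - k, together with a 0/1 filling D
  of the Young diagram (D i j = True means a 1 in row i, column j; D is False outside the
  diagram) satisfying the Le-condition.\<close>

definition in_shape :: "(nat \<Rightarrow> nat) \<Rightarrow> nat \<Rightarrow> nat \<Rightarrow> bool" where
  "in_shape lam i j \<longleftrightarrow> j < lam i"

definition le_diagrams :: "nat \<Rightarrow> nat \<Rightarrow> ((nat \<Rightarrow> nat) \<times> (nat \<Rightarrow> nat \<Rightarrow> bool)) set" where
  "le_diagrams k n = {(lam, D).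
      (\<forall>i. k \<le> i \<longrightarrow> lam i = 0) \<and>
      (\<forall>i. lam (Suc i) \<le> lam i) \<and>
      lam 0 \<le> n - k \<and>
      (\<forall>i j. D i j \<longrightarrow> in_shape lam i j) \<and>
      (\<forall>i j. in_shape lam i j \<and> \<not> D i j \<longrightarrow>
          \<not> ((\<exists>i'<i. D i' j) \<and> (\<exists>j'<j. D i j')))}"

definition le_rank :: "(nat \<Rightarrow> nat) \<times> (nat \<Rightarrow> nat \<Rightarrow> bool) \<Rightarrow> nat" where
  "le_rank d = card {(i, j). snd d i j}"

text \<open>Coefficients are taken in rat fls (Laurent series in q over Q), which contains
  Z[q,q^-1] as a subring.\<close>

abbreviation qvar :: "rat fls" where "qvar \<equiv> fls_X"

definition A_kn :: "nat \<Rightarrow> nat \<Rightarrow> rat fls" where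
  "A_kn k n = (if n < k then 0 else (\<Sum>d\<in>le_diagrams k n. qvar ^ le_rank d))"

definition qint :: "nat \<Rightarrow> rat fls" where
  "qint m = (\<Sum>i<m. qvar ^ i)"

definition qfact :: "nat \<Rightarrow> rat fls" where
  "qfact i = (\<Prod>m\<in>{1..i}. qint m)"

type_synonym ser = "rat fls fps fps"

definition cst :: "rat fls \<Rightarrow> ser" where
  "cst c = fps_const (fps_const c)"

definition xvar :: ser where "xvar = fps_const fps_X"

definition yvar :: ser where "yvar = fps_X"

definition A_gf :: ser where
  "A_gf = Abs_fps (\<lambda>k. if k = 0 then 0 else Abs_fps (\<lambda>n. A_kn k n))"

definition factor :: "nat \<Rightarrow> ser" where
  "factor j = cst (qvar ^ j) - cst (qvar ^ j * qint (j + 1)) * xvar + cst (qint j) * xvar * yvar"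

definition term_i :: "nat \<Rightarrow> ser" where
  "term_i i = cst (qvar ^ i * qfact i) * xvar ^ i * yvar ^ i *
              (\<Prod>j\<in>{0..i}. inverse (factor j))"

end

theory Submission
  imports Defs
begin

(* Build Le-diagrams by adding rows on top. A diagram in a (k+1) x m box whose top row has
   full length m is a diagram in a k x m box together with the set S of columns in which the
   new top row has a 1, and S may be any set of free columns: columns in which no row has a 1
   to the left of a 0. Weighting diagrams by q^rank z^(number of free columns), a new top row
   contributes a polynomial in the number of free columns whose closed form at z = [j+1]
   turns the row-by-row recursion into the functional equation
     (q^j - q^j [j+1] x + [j] x y) G_j = q^j + [j+1] x y G_(j+1)
   for the series G_j of diagrams weighted by [j+1]^(number of free columns).
   As G_0 = 1/(1-x) + A, iterating the equation N times writes A as the first N terms of the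
   sum plus a remainder divisible by y^N. *)

lemma sum_Pow_insert:
  assumes "finite A" "b \<notin> A"
  shows "(\<Sum>S\<in>Pow (insert b A). f S) = (\<Sum>S\<in>Pow A. f S) + (\<Sum>S\<in>Pow A. f (insert b S))"
proof -
  have "inj_on (insert b) (Pow A)"
    using assms(2) by (auto intro!: inj_onI)
  moreover have "Pow A \<inter> insert b ` Pow A = {}"
    using assms(2) by blast
  ultimately show ?thesis
    unfolding Pow_insert using assms(1) by (simp add: sum.union_disjoint sum.reindex)
qed

lemma fps_fps_mult_inverse:
  fixes f :: "'a::field fps fps"
  assumes "f $ 0 $ 0 \<noteq> 0"
  shows "f * inverse f = 1"
proof -
  have "f $ 0 * inverse (f $ 0) = 1"
    using assms by (rule inverse_mult_eq_1')
  then show ?thesis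
    using fps_right_inverse[of f "inverse (f $ 0)"] by (simp add: fps_inverse_def)
qed

lemma LIMSEQ_fps_if_diff_in_X_power:
  fixes S :: "nat \<Rightarrow> 'a::ring_1 fps"
  assumes "\<And>N. S N - L = fps_X ^ N * h N"
  shows "S \<longlonglongrightarrow> L"
proof (rule tendsto_fpsI)
  fix n
  have "S N $ n = L $ n" if "n < N" for N
  proof -
    have "(S N - L) $ n = 0"
      unfolding assms using that by (simp add: fps_X_power_mult_nth)
    then show ?thesis by simp
  qed
  then show "\<forall>\<^sub>F N in sequentially. S N $ n = L $ n"
    by (intro eventually_sequentiallyI[of "Suc n"]) simp
qed

(* The columns of U that remain free once a top row with its 1s exactly in S is added. *)
definition still_free :: "nat set \<Rightarrow> nat set \<Rightarrow> nat set" where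
  "still_free U S = {j \<in> U. j \<in> S \<or> (\<forall>s\<in>S. j < s)}"

lemma still_free_empty [simp]: "still_free U {} = U"
  by (simp add: still_free_def)

lemma card_still_free_insert_greater:
  assumes "finite A" "\<forall>a\<in>A. a < b" "S \<subseteq> A"
  shows "card (still_free (insert b A) S) = card (still_free A S) + (if S = {} then 1 else 0)"
      (is ?without_b)
    and "card (still_free (insert b A) (insert b S)) = Suc (card (still_free A S))"
      (is ?with_b)
proof -
  have "b \<notin> A" "finite (still_free A S)" "b \<notin> still_free A S"
    using assms by (auto simp: still_free_def)
  moreover have "still_free (insert b A) S = (if S = {} then insert b A else still_free A S)"
    and "still_free (insert b A) (insert b S) = insert b (still_free A S)"
    using assms by (auto simp: still_free_def) (meson less_asym subsetD)+
  ultimately show ?without_b and ?with_b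
    using assms(1) by simp_all
qed

fun top_row_gf :: "'a::comm_ring_1 \<Rightarrow> 'a \<Rightarrow> nat \<Rightarrow> 'a" where
  "top_row_gf q z 0 = 1"
| "top_row_gf q z (Suc u) = (1 + q * z) * top_row_gf q z u + (z - 1) * z ^ u"

lemma sum_Pow_still_free:
  fixes q z :: "'a::comm_ring_1"
  assumes "finite U"
  shows "(\<Sum>S\<in>Pow U. q ^ card S * z ^ card (still_free U S)) = top_row_gf q z (card U)"
  using assms
proof (induction U rule: finite_linorder_max_induct)
  case empty
  then show ?case by simp
next
  case (insert b A)
  let ?f = "\<lambda>S. q ^ card S * z ^ card (still_free A S)"
  have b: "b \<notin> A"
    using insert.hyps by blast
  have card_insert: "card (insert b S) = Suc (card S)" if "S \<in> Pow A" for S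
    using that b insert.hyps(1) by (auto simp: card_insert_if finite_subset)
  have "(\<Sum>S\<in>Pow A. q ^ card S * z ^ card (still_free (insert b A) S))
      = (\<Sum>S\<in>Pow A. ?f S + (if S = {} then (z - 1) * z ^ card A else 0))"
    using insert.hyps
    by (intro sum.cong) (auto simp: card_still_free_insert_greater(1) algebra_simps)
  moreover have "(\<Sum>S\<in>Pow A. q ^ card (insert b S) * z ^ card (still_free (insert b A) (insert b S)))
      = (\<Sum>S\<in>Pow A. q * z * ?f S)"
    using insert.hyps
    by (intro sum.cong) (auto simp: card_still_free_insert_greater(2) card_insert)
  ultimately have "(\<Sum>S\<in>Pow (insert b A). q ^ card S * z ^ card (still_free (insert b A) S))
      = (\<Sum>S\<in>Pow A. ?f S + (if S = {} then (z - 1) * z ^ card A else 0))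
        + (\<Sum>S\<in>Pow A. q * z * ?f S)"
    using insert.hyps b by (simp add: sum_Pow_insert)
  also have "\<dots> = top_row_gf q z (card (insert b A))"
    using insert.IH insert.hyps b
    by (simp add: sum.distrib sum_distrib_left[symmetric] algebra_simps)
  finally show ?case .
qed

(* Used with a = [j] and z = [j+1], so that z - a = q^j and 1 + q z = [j+2]. *)
lemma top_row_gf_closed_form:
  fixes q a z :: "'a::comm_ring_1"
  assumes "z = 1 + q * a"
  shows "(z - a) * top_row_gf q z u = z * (1 + q * z) ^ u - a * z ^ u"
proof (induction u)
  case (Suc u)
  have "(z - a) * top_row_gf q z (Suc u)
      = (1 + q * z) * (z * (1 + q * z) ^ u - a * z ^ u) + (z - a) * (z - 1) * z ^ u"
    by (simp add: Suc.IH[symmetric] algebra_simps)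
  also have "\<dots> = z * (1 + q * z) ^ Suc u - a * z ^ Suc u"
    using assms by (simp add: algebra_simps)
  finally show ?case .
qed simp

section \<open>Le-diagrams built row by row\<close>

type_synonym le_diagram = "(nat \<Rightarrow> nat) \<times> (nat \<Rightarrow> nat \<Rightarrow> bool)"

definition le_box :: "nat \<Rightarrow> nat \<Rightarrow> le_diagram set" where
  "le_box k m = le_diagrams k (k + m)"

lemma mem_le_box:
  "(lam, D) \<in> le_box k m \<longleftrightarrow>
     (\<forall>i\<ge>k. lam i = 0) \<and> (\<forall>i. lam (Suc i) \<le> lam i) \<and> lam 0 \<le> m \<and>
     (\<forall>i j. D i j \<longrightarrow> j < lam i) \<and>
     (\<forall>i j. j < lam i \<and> \<not> D i j \<longrightarrow> \<not> ((\<exists>i'<i. D i' j) \<and> (\<exists>j'<j. D i j')))"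
  by (simp add: le_box_def le_diagrams_def in_shape_def)

lemma le_box_row_le:
  assumes "(lam, D) \<in> le_box k m"
  shows "lam i \<le> m"
proof -
  have "\<forall>i. lam (Suc i) \<le> lam i" "lam 0 \<le> m"
    using assms by (simp_all add: mem_le_box)
  then show ?thesis
    using lift_Suc_antimono_le[of lam 0 i] by simp
qed

lemma le_box_no_rows: "le_box 0 m = {(\<lambda>_. 0, \<lambda>_ _. False)}"
  by (auto simp: mem_le_box fun_eq_iff)

definition full_top_row :: "nat \<Rightarrow> nat \<Rightarrow> le_diagram set" where
  "full_top_row k m = {d \<in> le_box k m. fst d 0 = m}"

lemma le_box_zero_cols: "le_box k 0 = full_top_row k 0"
  by (auto simp: full_top_row_def mem_le_box split_paired_all)

lemma le_box_Suc_cols: "le_box k (Suc m) = le_box k m \<union> full_top_row k (Suc m)"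
  by (auto simp: full_top_row_def mem_le_box split_paired_all)

lemma le_box_disjoint_full_top_row: "le_box k m \<inter> full_top_row k (Suc m) = {}"
  by (auto simp: full_top_row_def mem_le_box split_paired_all)

(* A 1 may be put in column j of a new top row without creating a forbidden 0 below it. *)
definition free_column :: "le_diagram \<Rightarrow> nat \<Rightarrow> bool" where
  "free_column d j \<longleftrightarrow> \<not> (\<exists>i j'. j' < j \<and> snd d i j' \<and> j < fst d i \<and> \<not> snd d i j)"

definition free_columns :: "nat \<Rightarrow> le_diagram \<Rightarrow> nat set" where
  "free_columns m d = {j. j < m \<and> free_column d j}"

definition add_top_row :: "nat \<Rightarrow> le_diagram \<Rightarrow> nat set \<Rightarrow> le_diagram" where
  "add_top_row m d S = ((\<lambda>i. case i of 0 \<Rightarrow> m | Suc i \<Rightarrow> fst d i),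
                        (\<lambda>i j. case i of 0 \<Rightarrow> j \<in> S | Suc i \<Rightarrow> snd d i j))"

definition drop_top_row :: "le_diagram \<Rightarrow> le_diagram" where
  "drop_top_row d = ((\<lambda>i. fst d (Suc i)), (\<lambda>i j. snd d (Suc i) j))"

lemma finite_free_columns [simp]: "finite (free_columns m d)"
  by (simp add: free_columns_def)

lemma free_columns_Suc:
  assumes "d \<in> le_box k m"
  shows "free_columns (Suc m) d = insert m (free_columns m d)"
proof -
  have "fst d i \<le> m" for i
    using assms le_box_row_le[of "fst d" "snd d"] by simp
  then have "free_column d m"
    by (auto simp: free_column_def not_less)
  then show ?thesis
    by (auto simp: free_columns_def)
qed

lemma add_top_row_in_full_top_row:
  assumes d: "d \<in> le_box k m" and S: "S \<subseteq> free_columns m d"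
  shows "add_top_row m d S \<in> full_top_row (Suc k) m"
proof -
  obtain lam D where d_eq: "d = (lam, D)" by fastforce
  have h: "\<forall>i\<ge>k. lam i = 0" "\<forall>i. lam (Suc i) \<le> lam i" "lam 0 \<le> m"
    "\<forall>i j. D i j \<longrightarrow> j < lam i"
    "\<forall>i j. j < lam i \<and> \<not> D i j \<longrightarrow> \<not> ((\<exists>i'<i. D i' j) \<and> (\<exists>j'<j. D i j'))"
    using d by (simp_all add: d_eq mem_le_box)
  have S_free: "j < m" "\<forall>i j'. j' < j \<and> D i j' \<and> j < lam i \<longrightarrow> D i j" if "j \<in> S" for j
    using S that by (auto simp: free_columns_def free_column_def d_eq)
  let ?lam = "\<lambda>i. case i of 0 \<Rightarrow> m | Suc i \<Rightarrow> lam i"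
  let ?D = "\<lambda>i j. case i of 0 \<Rightarrow> j \<in> S | Suc i \<Rightarrow> D i j"
  have le_condition: "\<not> ((\<exists>i'<i. ?D i' j) \<and> (\<exists>j'<j. ?D i j'))"
    if "j < ?lam i" "\<not> ?D i j" for i j
  proof (cases i)
    case (Suc i0)
    show ?thesis
    proof
      assume "(\<exists>i'<i. ?D i' j) \<and> (\<exists>j'<j. ?D i j')"
      then obtain i' j' where "i' < Suc i0" "?D i' j" "j' < j" "D i0 j'"
        using Suc by auto
      with that Suc show False
        using h(5) by (cases i') (auto dest!: S_free(2))
    qed
  qed simp
  have "(?lam, ?D) \<in> le_box (Suc k) m"
    unfolding mem_le_box
  proof (intro conjI)
    show "\<forall>i j. j < ?lam i \<and> \<not> ?D i j \<longrightarrow> \<not> ((\<exists>i'<i. ?D i' j) \<and> (\<exists>j'<j. ?D i j'))"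
      using le_condition by blast
  qed (use h S_free in \<open>auto split: nat.splits\<close>)
  moreover have "add_top_row m d S = (?lam, ?D)"
    by (auto simp: add_top_row_def d_eq fun_eq_iff split: nat.split)
  ultimately show ?thesis
    by (simp add: full_top_row_def)
qed

lemma full_top_row_drop_top_row:
  assumes d: "d \<in> full_top_row (Suc k) m"
  shows "drop_top_row d \<in> le_box k m" "{j. snd d 0 j} \<subseteq> free_columns m (drop_top_row d)"
    "add_top_row m (drop_top_row d) {j. snd d 0 j} = d"
proof -
  obtain lam D where d_eq: "d = (lam, D)" by fastforce
  have h: "\<forall>i\<ge>Suc k. lam i = 0" "\<forall>i. lam (Suc i) \<le> lam i" "lam 0 = m"
    "\<forall>i j. D i j \<longrightarrow> j < lam i"
    "\<forall>i j. j < lam i \<and> \<not> D i j \<longrightarrow> \<not> ((\<exists>i'<i. D i' j) \<and> (\<exists>j'<j. D i j'))"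
    using d by (auto simp: d_eq mem_le_box full_top_row_def)
  show "drop_top_row d \<in> le_box k m"
    unfolding drop_top_row_def d_eq mem_le_box fst_conv snd_conv
    using h by (metis Suc_le_mono less_Suc_eq_0_disj)
  show "{j. snd d 0 j} \<subseteq> free_columns m (drop_top_row d)"
  proof
    fix j
    assume "j \<in> {j. snd d 0 j}"
    then have "D 0 j" by (simp add: d_eq)
    then have "j < m" "\<forall>i j'. j' < j \<and> D (Suc i) j' \<and> j < lam (Suc i) \<longrightarrow> D (Suc i) j"
      using h(3,4) h(5) by blast+
    then show "j \<in> free_columns m (drop_top_row d)"
      by (auto simp: free_columns_def free_column_def drop_top_row_def d_eq)
  qed
  show "add_top_row m (drop_top_row d) {j. snd d 0 j} = d"
    using h(3) by (auto simp: add_top_row_def drop_top_row_def d_eq fun_eq_iff split: nat.split)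
qed

lemma drop_top_row_add_top_row:
  "drop_top_row (add_top_row m d S) = d" "{j. snd (add_top_row m d S) 0 j} = S"
  by (simp_all add: drop_top_row_def add_top_row_def)

lemma bij_betw_add_top_row:
  "bij_betw (\<lambda>(d, S). add_top_row m d S)
     (SIGMA d:le_box k m. Pow (free_columns m d)) (full_top_row (Suc k) m)"
proof (rule bij_betw_byWitness[where f' = "\<lambda>d. (drop_top_row d, {j. snd d 0 j})"])
  show "(\<lambda>d. (drop_top_row d, {j. snd d 0 j})) ` full_top_row (Suc k) m
          \<subseteq> (SIGMA d:le_box k m. Pow (free_columns m d))"
    using full_top_row_drop_top_row(1,2) by blast
qed (auto simp: drop_top_row_add_top_row add_top_row_in_full_top_row full_top_row_drop_top_row(3))

lemma finite_le_box: "finite (le_box k m)"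
proof (induction k arbitrary: m)
  case 0
  then show ?case by (simp add: le_box_no_rows)
next
  case (Suc k)
  have "finite (full_top_row (Suc k) m)" for m
    using bij_betw_finite[OF bij_betw_add_top_row] Suc.IH
    by (metis finite_Pow_iff finite_SigmaI finite_free_columns)
  then show ?case
    by (induction m) (simp_all add: le_box_zero_cols le_box_Suc_cols)
qed

lemma finite_cells:
  assumes "d \<in> le_box k m"
  shows "finite {(i, j). snd d i j}"
proof -
  obtain lam D where d_eq: "d = (lam, D)" by fastforce
  have rows: "\<forall>i\<ge>k. lam i = 0" and cells: "\<forall>i j. D i j \<longrightarrow> j < lam i"
    using assms by (simp_all add: d_eq mem_le_box)
  have "j < m" "i < k" if "D i j" for i j
  proof -
    have "j < lam i"
      using cells that by blast
    then show "j < m"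
      using le_box_row_le[of lam D k m i] assms by (simp add: d_eq)
    show "i < k"
    proof (rule ccontr)
      assume "\<not> i < k"
      then show False
        using rows \<open>j < lam i\<close> by simp
    qed
  qed
  then have "{(i, j). snd d i j} \<subseteq> {..<k} \<times> {..<m}"
    by (auto simp: d_eq)
  then show ?thesis
    by (rule finite_subset) simp
qed

lemma le_rank_add_top_row:
  assumes "d \<in> le_box k m" "finite S"
  shows "le_rank (add_top_row m d S) = le_rank d + card S"
proof -
  have cells: "{(i, j). snd (add_top_row m d S) i j}
      = (\<lambda>j. (0, j)) ` S \<union> (\<lambda>(i, j). (Suc i, j)) ` {(i, j). snd d i j}"
  proof (rule set_eqI)
    fix p :: "nat \<times> nat"
    obtain i j where p: "p = (i, j)" by fastforce
    show "p \<in> {(i, j). snd (add_top_row m d S) i j}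
        \<longleftrightarrow> p \<in> (\<lambda>j. (0, j)) ` S \<union> (\<lambda>(i, j). (Suc i, j)) ` {(i, j). snd d i j}"
      by (cases i) (auto simp: p add_top_row_def image_iff)
  qed
  have "inj_on (\<lambda>j. (0::nat, j)) S" "inj_on (\<lambda>(i, j). (Suc i, j)) {(i, j). snd d i j}"
    by (auto simp: inj_on_def)
  moreover have "(\<lambda>j. (0, j)) ` S \<inter> (\<lambda>(i, j). (Suc i, j)) ` {(i, j). snd d i j} = {}"
    by auto
  ultimately show ?thesis
    using assms(2) finite_cells[OF assms(1)]
    by (simp add: le_rank_def cells card_Un_disjoint card_image)
qed

lemma free_columns_add_top_row:
  "free_columns m (add_top_row m d S) = still_free (free_columns m d) S"
proof -
  have free: "free_column (add_top_row m d S) j \<longleftrightarrow> free_column d j \<and> (j \<in> S \<or> (\<forall>s\<in>S. j < s))"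
    if "j < m" for j
  proof -
    have "free_column (add_top_row m d S) j \<longleftrightarrow>
        \<not> (\<exists>j'<j. j' \<in> S \<and> j \<notin> S) \<and> free_column d j"
      using that unfolding free_column_def add_top_row_def
      by (auto split: nat.splits)
    then show ?thesis
      by (auto simp: not_less le_less)
  qed
  show ?thesis
    unfolding free_columns_def still_free_def
    by (rule Collect_cong) (use free in auto)
qed

section \<open>Counting Le-diagrams by rank and free columns\<close>

definition free_gf :: "'a::comm_ring_1 \<Rightarrow> 'a \<Rightarrow> nat \<Rightarrow> nat \<Rightarrow> 'a" where
  "free_gf q z k m = (\<Sum>d\<in>le_box k m. q ^ le_rank d * z ^ card (free_columns m d))"

lemma sum_full_top_row:
  "(\<Sum>d\<in>full_top_row (Suc k) m. q ^ le_rank d * z ^ card (free_columns m d))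
   = (\<Sum>d\<in>le_box k m. q ^ le_rank d * top_row_gf q z (card (free_columns m d)))"
proof -
  have "(\<Sum>d\<in>full_top_row (Suc k) m. q ^ le_rank d * z ^ card (free_columns m d))
      = (\<Sum>(d, S)\<in>(SIGMA d:le_box k m. Pow (free_columns m d)).
           q ^ le_rank (add_top_row m d S) * z ^ card (free_columns m (add_top_row m d S)))"
    using sum.reindex_bij_betw[OF bij_betw_add_top_row,
        of "\<lambda>d. q ^ le_rank d * z ^ card (free_columns m d)"]
    by (simp add: split_def)
  also have "\<dots> = (\<Sum>d\<in>le_box k m. \<Sum>S\<in>Pow (free_columns m d).
           q ^ le_rank d * (q ^ card S * z ^ card (still_free (free_columns m d) S)))"
    using finite_le_box
    by (subst sum.Sigma[symmetric])
       (auto intro!: sum.cong simp: le_rank_add_top_row free_columns_add_top_row power_add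
         dest: finite_subset[OF _ finite_free_columns])
  also have "\<dots> = (\<Sum>d\<in>le_box k m. q ^ le_rank d * top_row_gf q z (card (free_columns m d)))"
    by (simp add: sum_distrib_left[symmetric] sum_Pow_still_free)
  finally show ?thesis .
qed

lemma free_gf_no_rows: "free_gf q z 0 m = z ^ m"
proof -
  have "free_columns m (\<lambda>_. 0, \<lambda>_ _. False) = {..<m}"
    by (auto simp: free_columns_def free_column_def)
  then show ?thesis
    by (simp add: free_gf_def le_box_no_rows le_rank_def)
qed

lemma free_gf_Suc_0:
  "free_gf q z (Suc k) 0 = (\<Sum>d\<in>le_box k 0. q ^ le_rank d * top_row_gf q z (card (free_columns 0 d)))"
  unfolding free_gf_def le_box_zero_cols[of "Suc k"] by (rule sum_full_top_row)

lemma free_gf_Suc_Suc: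
  "free_gf q z (Suc k) (Suc m) = z * free_gf q z (Suc k) m
     + (\<Sum>d\<in>le_box k (Suc m). q ^ le_rank d * top_row_gf q z (card (free_columns (Suc m) d)))"
proof -
  have fin: "finite (full_top_row (Suc k) (Suc m))"
    using finite_le_box[of "Suc k" "Suc m"] by (simp add: le_box_Suc_cols)
  have "card (free_columns (Suc m) d) = Suc (card (free_columns m d))" if "d \<in> le_box (Suc k) m" for d
    using free_columns_Suc[OF that] by (simp add: free_columns_def)
  then have "(\<Sum>d\<in>le_box (Suc k) m. q ^ le_rank d * z ^ card (free_columns (Suc m) d))
      = z * free_gf q z (Suc k) m"
    by (simp add: free_gf_def sum_distrib_left algebra_simps)
  then show ?thesis
    unfolding free_gf_def[of q z "Suc k" "Suc m"] le_box_Suc_cols[of "Suc k" m]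
    using fin finite_le_box le_box_disjoint_full_top_row
    by (simp add: sum.union_disjoint sum_full_top_row)
qed

lemma sum_top_row_gf:
  fixes q a z :: "'a::comm_ring_1"
  assumes "z = 1 + q * a"
  shows "(z - a) * (\<Sum>d\<in>le_box k m. q ^ le_rank d * top_row_gf q z (card (free_columns m d)))
    = z * free_gf q (1 + q * z) k m - a * free_gf q z k m"
proof -
  have "(z - a) * (q ^ r * top_row_gf q z u) = z * (q ^ r * (1 + q * z) ^ u) - a * (q ^ r * z ^ u)"
    for r u
  proof -
    have "(z - a) * (q ^ r * top_row_gf q z u) = q ^ r * ((z - a) * top_row_gf q z u)"
      by (simp only: mult.left_commute)
    then show ?thesis
      unfolding top_row_gf_closed_form[OF assms] by (simp add: algebra_simps)
  qed
  then show ?thesis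
    by (simp add: free_gf_def sum_distrib_left sum_subtractf)
qed

lemma free_gf_Suc_rows_0:
  fixes q a z :: "'a::comm_ring_1"
  assumes "z = 1 + q * a"
  shows "(z - a) * free_gf q z (Suc k) 0 = z * free_gf q (1 + q * z) k 0 - a * free_gf q z k 0"
  using sum_top_row_gf[OF assms] by (simp add: free_gf_Suc_0)

lemma free_gf_Suc_rows_Suc:
  fixes q a z :: "'a::comm_ring_1"
  assumes "z = 1 + q * a"
  shows "(z - a) * free_gf q z (Suc k) (Suc m) = (z - a) * z * free_gf q z (Suc k) m
    + (z * free_gf q (1 + q * z) k (Suc m) - a * free_gf q z k (Suc m))"
  using sum_top_row_gf[OF assms] by (simp add: free_gf_Suc_Suc algebra_simps)

section \<open>The functional equation\<close>

lemma qint_Suc: "qint (Suc j) = 1 + qvar * qint j"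
  unfolding qint_def by (subst sum.lessThan_Suc_shift) (simp add: sum_distrib_left)

lemma qint_Suc_diff: "qint (Suc j) - qint j = qvar ^ j"
  by (simp add: qint_def)

definition row_gf :: "nat \<Rightarrow> nat \<Rightarrow> rat fls fps" where
  "row_gf j k = Abs_fps (free_gf qvar (qint (Suc j)) k)"

definition row_factor :: "nat \<Rightarrow> rat fls fps" where
  "row_factor j = fps_const (qvar ^ j) - fps_const (qvar ^ j * qint (Suc j)) * fps_X"

lemma row_factor_mult_nth:
  "(row_factor j * f) $ n = qvar ^ j * (f $ n - (if n = 0 then 0 else qint (Suc j) * f $ (n - 1)))"
  by (simp add: row_factor_def algebra_simps mult.assoc)

lemma row_factor_mult_row_gf_0: "row_factor j * row_gf j 0 = fps_const (qvar ^ j)"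
proof (rule fps_ext)
  fix n
  show "(row_factor j * row_gf j 0) $ n = fps_const (qvar ^ j) $ n"
    by (cases n) (simp_all add: row_factor_mult_nth row_gf_def free_gf_no_rows del: fps_mult_nth_0)
qed

lemma row_factor_mult_row_gf_Suc:
  "row_factor j * row_gf j (Suc k)
     = fps_const (qint (Suc j)) * row_gf (Suc j) k - fps_const (qint j) * row_gf j k"
proof (rule fps_ext)
  fix n
  have z: "qint (Suc j) = 1 + qvar * qint j" and w: "qint (Suc (Suc j)) = 1 + qvar * qint (Suc j)"
    by (rule qint_Suc)+
  show "(row_factor j * row_gf j (Suc k)) $ n
      = (fps_const (qint (Suc j)) * row_gf (Suc j) k - fps_const (qint j) * row_gf j k) $ n"
  proof (cases n)
    case 0
    then show ?thesis
      using free_gf_Suc_rows_0[OF z, of k]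
      by (simp add: row_factor_mult_nth row_gf_def qint_Suc_diff w[symmetric] del: fps_mult_nth_0)
  next
    case (Suc m)
    then show ?thesis
      using free_gf_Suc_rows_Suc[OF z, of k m]
      unfolding qint_Suc_diff w[symmetric]
      by (simp add: row_factor_mult_nth row_gf_def right_diff_distrib mult.assoc)
  qed
qed

(* The series G_j of the proof idea above. *)
definition A_weighted :: "nat \<Rightarrow> ser" where
  "A_weighted j = Abs_fps (\<lambda>k. fps_X ^ k * row_gf j k)"

lemma factor_mult_nth:
  "(factor j * F) $ k
     = row_factor j * F $ k + (if k = 0 then 0 else fps_const (qint j) * fps_X * F $ (k - 1))"
proof -
  have "factor j = fps_const (row_factor j) + fps_const (fps_const (qint j) * fps_X) * fps_X"
    by (simp add: factor_def row_factor_def cst_def xvar_def yvar_def)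
  then show ?thesis
    by (simp add: distrib_right mult.assoc)
qed

lemma factor_mult_A_weighted:
  "factor j * A_weighted j
     = cst (qvar ^ j) + cst (qint (Suc j)) * xvar * yvar * A_weighted (Suc j)"
proof (rule fps_ext)
  fix k
  show "(factor j * A_weighted j) $ k
      = (cst (qvar ^ j) + cst (qint (Suc j)) * xvar * yvar * A_weighted (Suc j)) $ k"
  proof (cases k)
    case 0
    then show ?thesis
      by (simp add: factor_mult_nth A_weighted_def row_factor_mult_row_gf_0
          cst_def xvar_def yvar_def mult.assoc del: fps_mult_nth_0)
  next
    case (Suc k')
    have "(factor j * A_weighted j) $ k
        = fps_X ^ k * (row_factor j * row_gf j (Suc k') + fps_const (qint j) * row_gf j k')"
      by (simp add: Suc factor_mult_nth A_weighted_def algebra_simps)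
    also have "\<dots> = fps_X ^ k * (fps_const (qint (Suc j)) * row_gf (Suc j) k')"
      by (simp add: row_factor_mult_row_gf_Suc)
    finally show ?thesis
      by (simp add: Suc A_weighted_def cst_def xvar_def yvar_def algebra_simps)
  qed
qed

lemma factor_mult_inverse: "factor j * inverse (factor j) = 1"
  by (rule fps_fps_mult_inverse) (simp add: factor_def cst_def xvar_def yvar_def)

lemma A_weighted_eq:
  "A_weighted j = inverse (factor j)
     * (cst (qvar ^ j) + cst (qint (Suc j)) * xvar * yvar * A_weighted (Suc j))"
proof -
  have "A_weighted j = (inverse (factor j) * factor j) * A_weighted j"
    using factor_mult_inverse[of j] by (simp add: mult.commute)
  then show ?thesis
    by (simp only: mult.assoc factor_mult_A_weighted)
qed

lemma A_weighted_0: "A_weighted 0 = A_gf + inverse (factor 0)"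
proof -
  have A_weighted_split: "A_weighted 0 = A_gf + fps_const (row_gf 0 0)"
  proof (rule fps_ext)
    fix k
    have "(fps_X ^ k * row_gf 0 k) $ n = A_kn k n" if "k > 0" for n
      by (simp add: fps_X_power_mult_nth row_gf_def free_gf_def A_kn_def le_box_def qint_def)
    then show "A_weighted 0 $ k = (A_gf + fps_const (row_gf 0 0)) $ k"
      by (auto simp: A_weighted_def A_gf_def intro: fps_ext)
  qed
  have "factor 0 = fps_const (row_factor 0)"
    by (simp add: factor_def row_factor_def cst_def xvar_def qint_def)
  then have right_inverse: "factor 0 * fps_const (row_gf 0 0) = 1"
    using row_factor_mult_row_gf_0[of 0] by simp
  have "inverse (factor 0) = inverse (factor 0) * (factor 0 * fps_const (row_gf 0 0))"
    by (simp add: right_inverse)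
  also have "\<dots> = (factor 0 * inverse (factor 0)) * fps_const (row_gf 0 0)"
    by (simp only: mult_ac)
  finally show ?thesis
    by (simp add: A_weighted_split factor_mult_inverse)
qed

lemma cst_mult: "cst (a * b) = cst a * cst b"
  by (simp add: cst_def)

lemma A_weighted_0_telescope:
  "A_weighted 0 = (\<Sum>i<N. term_i i)
     + cst (qfact N) * xvar ^ N * yvar ^ N * (\<Prod>j<N. inverse (factor j)) * A_weighted N"
proof (induction N)
  case 0
  then show ?case by (simp add: qfact_def cst_def)
next
  case (Suc N)
  let ?C = "cst (qfact N) * xvar ^ N * yvar ^ N * (\<Prod>j<N. inverse (factor j)) * inverse (factor N)"
  have "term_i N = ?C * cst (qvar ^ N)"
    by (simp add: term_i_def cst_mult atLeast0AtMost lessThan_Suc_atMost[symmetric] mult_ac)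
  moreover have "?C * (cst (qint (Suc N)) * xvar * yvar * A_weighted (Suc N))
      = cst (qfact (Suc N)) * xvar ^ Suc N * yvar ^ Suc N
          * (\<Prod>j<Suc N. inverse (factor j)) * A_weighted (Suc N)"
    by (simp add: qfact_def cst_mult mult_ac)
  moreover have "cst (qfact N) * xvar ^ N * yvar ^ N * (\<Prod>j<N. inverse (factor j)) * A_weighted N
      = ?C * cst (qvar ^ N) + ?C * (cst (qint (Suc N)) * xvar * yvar * A_weighted (Suc N))"
    by (subst A_weighted_eq) (simp only: mult.assoc distrib_left)
  ultimately show ?case
    using Suc.IH by (simp add: add.assoc)
qed

theorem mainTheorem5:
  shows "(\<lambda>i. term_i (Suc i)) sums A_gf"
  unfolding sums_def
proof (rule LIMSEQ_fps_if_diff_in_X_power)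
  fix N
  let ?R = "cst (qfact (Suc N)) * xvar ^ Suc N * yvar ^ Suc N
              * (\<Prod>j<Suc N. inverse (factor j)) * A_weighted (Suc N)"
  have term0: "term_i 0 = inverse (factor 0)"
    by (simp add: term_i_def qfact_def cst_def)
  have "(\<Sum>i<N. term_i (Suc i)) = (\<Sum>i<Suc N. term_i i) - term_i 0"
    by (subst sum.lessThan_Suc_shift) simp
  also have "(\<Sum>i<Suc N. term_i i) = A_weighted 0 - ?R"
    unfolding A_weighted_0_telescope[of "Suc N"] by simp
  also have "A_weighted 0 - ?R - term_i 0 = A_gf - ?R"
    by (simp add: A_weighted_0 term0)
  finally show "(\<Sum>i<N. term_i (Suc i)) - A_gf = fps_X ^ N
      * - (cst (qfact (Suc N)) * xvar ^ Suc N * yvar * (\<Prod>j<Suc N. inverse (factor j))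
           * A_weighted (Suc N))"
    by (simp add: yvar_def power_Suc2 mult_ac)
qed
end
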